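(* Let $G=(V,E,H)$ be a HEDG and $U_1,U_2\subseteq V$ disjoint subsets. Then $(G^{\mathrm{marg}\setminus U_1})^{\mathrm{marg}\setminus U_2}=G^{\mathrm{marg}\setminus(U_1\cup U_2)}=(G^{\mathrm{marg}\setminus U_2})^{\mathrm{marg}\setminus U_1}$.
   Context: A HEDG is $G=(V,E,H)$ with $V$ finite, $E\subseteq V\times V$ directed edges (self-loops allowed), $H$ a simplicial complex on $V$ (a set of subsets of $V$ containing all singletons and closed under taking subsets). Marginalization of $G$ with respect to $U\subseteq V$: $G^{\mathrm{marg}\setminus U}=(V\setminus U,E',H')$ where $v_1\to v_2\in E'$ iff $G$ has a directed path $v_1\to u_1\to\cdots\to u_r\to v_2$ with $r\ge0$ and all $u_i\in U$; and $F'\subseteq V\setminus U$ belongs to $H'$ iff there exists $F\in H$ with $F\subseteq F'\cup U$ such that every $v\in F'$ either lies in $F\setminus U$ or there is a directed path $u_1\to\cdots\to u_r\to v$ in $G$ with $r\ge1$, all $u_i\in U$ and $u_1\in F\cap U$. *)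

theory Defs
  imports Main
begin

(* A HEDG G = (V, E, H): vertices, directed edges (self-loops allowed), hyperedges. *)
type_synonym 'a hedg = "'a set \<times> ('a \<times> 'a) set \<times> 'a set set"

definition hverts :: "'a hedg \<Rightarrow> 'a set" where "hverts G = fst G"
definition hedges :: "'a hedg \<Rightarrow> ('a \<times> 'a) set" where "hedges G = fst (snd G)"
definition hhyper :: "'a hedg \<Rightarrow> 'a set set" where "hhyper G = snd (snd G)"

definition is_hedg :: "'a hedg \<Rightarrow> bool" where
  "is_hedg G \<longleftrightarrow>
     finite (hverts G) \<and>
     hedges G \<subseteq> hverts G \<times> hverts G \<and>
     (\<forall>F \<in> hhyper G. F \<subseteq> hverts G) \<and>
     (\<forall>v \<in> hverts G. {v} \<in> hhyper G) \<and>
     (\<forall>F \<in> hhyper G. \<forall>F'. F' \<subseteq> F \<longrightarrow> F' \<in> hhyper G)"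

definition is_walk :: "('a \<times> 'a) set \<Rightarrow> 'a list \<Rightarrow> bool" where
  "is_walk E xs \<longleftrightarrow> (\<forall>i. Suc i < length xs \<longrightarrow> (xs ! i, xs ! Suc i) \<in> E)"

definition path_via :: "('a \<times> 'a) set \<Rightarrow> 'a set \<Rightarrow> 'a \<Rightarrow> 'a \<Rightarrow> bool" where
  "path_via E U v1 v2 \<longleftrightarrow> (\<exists>us. set us \<subseteq> U \<and> is_walk E (v1 # us @ [v2]))"

definition path_from_in :: "('a \<times> 'a) set \<Rightarrow> 'a set \<Rightarrow> 'a \<Rightarrow> 'a \<Rightarrow> bool" where
  "path_from_in E U u v \<longleftrightarrow> (\<exists>us. set (u # us) \<subseteq> U \<and> is_walk E (u # us @ [v]))"

definition marg :: "'a hedg \<Rightarrow> 'a set \<Rightarrow> 'a hedg" where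
  "marg G U =
    (hverts G - U,
     {(v1, v2). v1 \<in> hverts G - U \<and> v2 \<in> hverts G - U \<and> path_via (hedges G) U v1 v2},
     {F'. F' \<subseteq> hverts G - U \<and>
          (\<exists>F \<in> hhyper G. F \<subseteq> F' \<union> U \<and>
             (\<forall>v \<in> F'. v \<in> F - U \<or>
                (\<exists>u \<in> F \<inter> U. path_from_in (hedges G) U u v)))})"

end

theory Submission
  imports Defs
begin

text \<open>A path through U1 \<union> U2 splits at its interior vertices in U2 into segments whose
  interiors lie in U1; each segment is an edge, or a path, of the graph marginalized over U1.
  Hence paths through U1 \<union> U2 in G are exactly paths through U2 in the U1-marginal, and the
  same decomposition shows that marginalizing a hyperedge in two steps yields the same faces
  as marginalizing it at once.\<close>

inductive path_through :: "('a \<times> 'a) set \<Rightarrow> 'a set \<Rightarrow> 'a \<Rightarrow> 'a \<Rightarrow> bool" for E U where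
  edge: "(a, b) \<in> E \<Longrightarrow> path_through E U a b"
| Cons: "(a, c) \<in> E \<Longrightarrow> c \<in> U \<Longrightarrow> path_through E U c b \<Longrightarrow> path_through E U a b"

lemma path_through_mono: "path_through E U a b \<Longrightarrow> U \<subseteq> W \<Longrightarrow> path_through E W a b"
  by (induction rule: path_through.induct) (auto intro: path_through.intros)

lemma path_through_trans:
  "path_through E U a c \<Longrightarrow> c \<in> U \<Longrightarrow> path_through E U c b \<Longrightarrow> path_through E U a b"
  by (induction rule: path_through.induct) (auto intro: path_through.intros)

lemma is_walk_Cons_Cons: "is_walk E (x # y # xs) \<longleftrightarrow> (x, y) \<in> E \<and> is_walk E (y # xs)"
  unfolding is_walk_def by (auto simp: less_Suc_eq_0_disj)

lemma path_via_iff_path_through: "path_via E U a b \<longleftrightarrow> path_through E U a b"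
proof
  assume "path_via E U a b"
  then obtain us where "set us \<subseteq> U" "is_walk E (a # us @ [b])"
    unfolding path_via_def by blast
  then show "path_through E U a b"
    by (induction us arbitrary: a) (auto simp: is_walk_Cons_Cons intro: path_through.intros)
next
  assume "path_through E U a b"
  then show "path_via E U a b"
  proof (induction rule: path_through.induct)
    case (edge a b)
    then show ?case
      unfolding path_via_def by (intro exI[of _ "[]"]) (simp add: is_walk_def)
  next
    case (Cons a c b)
    then obtain us where "set us \<subseteq> U" "is_walk E (c # us @ [b])"
      unfolding path_via_def by blast
    with Cons.hyps show ?case
      unfolding path_via_def by (intro exI[of _ "c # us"]) (simp add: is_walk_Cons_Cons)
  qed
qed

lemma path_from_in_iff_path_through: "path_from_in E U u v \<longleftrightarrow> u \<in> U \<and> path_through E U u v"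
  unfolding path_from_in_def path_via_iff_path_through[symmetric] path_via_def by auto

definition marg_edges :: "'a set \<Rightarrow> ('a \<times> 'a) set \<Rightarrow> 'a set \<Rightarrow> ('a \<times> 'a) set" where
  "marg_edges V E U = {(a, b). a \<in> V - U \<and> b \<in> V - U \<and> path_through E U a b}"

definition marg_face :: "('a \<times> 'a) set \<Rightarrow> 'a set \<Rightarrow> 'a set \<Rightarrow> 'a set \<Rightarrow> bool" where
  "marg_face E U F F' \<longleftrightarrow>
     F \<subseteq> F' \<union> U \<and> (\<forall>v \<in> F'. v \<in> F - U \<or> (\<exists>u \<in> F \<inter> U. path_through E U u v))"

lemma hverts_marg: "hverts (marg G U) = hverts G - U"
  by (simp add: marg_def hverts_def)

lemma hedges_marg: "hedges (marg G U) = marg_edges (hverts G) (hedges G) U"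
  by (simp add: marg_def hedges_def hverts_def marg_edges_def path_via_iff_path_through)

lemma hhyper_marg:
  "hhyper (marg G U) = {F'. F' \<subseteq> hverts G - U \<and> (\<exists>F \<in> hhyper G. marg_face (hedges G) U F F')}"
  unfolding marg_def hhyper_def marg_face_def path_from_in_iff_path_through
  by (auto simp: hverts_def hedges_def hhyper_def)

lemma hedg_eqI:
  "hverts G = hverts G' \<Longrightarrow> hedges G = hedges G' \<Longrightarrow> hhyper G = hhyper G' \<Longrightarrow> G = G'"
  by (simp add: hverts_def hedges_def hhyper_def prod_eq_iff)

lemma path_through_marg_edges:
  "path_through (marg_edges V E U1) U2 a b \<Longrightarrow> path_through E (U1 \<union> U2) a b"
proof (induction rule: path_through.induct)
  case (edge a b)
  then show ?case
    by (auto simp: marg_edges_def intro: path_through_mono)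
next
  case (Cons a c b)
  then have "path_through E (U1 \<union> U2) a c"
    by (auto simp: marg_edges_def intro: path_through_mono)
  with Cons show ?case
    by (blast intro: path_through_trans)
qed

lemma path_through_Un_split:
  assumes "U2 \<subseteq> V" and "U1 \<inter> U2 = {}"
  shows "path_through E (U1 \<union> U2) a b \<Longrightarrow> b \<in> V - U1 \<Longrightarrow>
    path_through E U1 a b \<or>
    (\<exists>c \<in> U2. path_through E U1 a c \<and> path_through (marg_edges V E U1) U2 c b)"
proof (induction rule: path_through.induct)
  case (edge a b)
  then show ?case by (auto intro: path_through.edge)
next
  case (Cons a c b)
  show ?case
  proof (cases "c \<in> U1")
    case True
    with Cons show ?thesis by (meson path_through.Cons)
  next
    case False
    with Cons.hyps assms have c: "c \<in> U2" "c \<in> V - U1" by auto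
    from Cons.IH[OF Cons.prems] have "path_through (marg_edges V E U1) U2 c b"
    proof
      assume "path_through E U1 c b"
      with c Cons.prems show ?thesis
        by (auto simp: marg_edges_def intro: path_through.edge)
    next
      assume "\<exists>c' \<in> U2. path_through E U1 c c' \<and> path_through (marg_edges V E U1) U2 c' b"
      with c assms show ?thesis
        by (auto simp: marg_edges_def intro: path_through.Cons)
    qed
    with c Cons.hyps(1) show ?thesis by (auto intro: path_through.edge)
  qed
qed

lemma path_through_marg_edgesI:
  assumes "U2 \<subseteq> V" and "U1 \<inter> U2 = {}"
    and "path_through E (U1 \<union> U2) a b" and "a \<in> V - U1" and "b \<in> V - U1"
  shows "path_through (marg_edges V E U1) U2 a b"
  using path_through_Un_split[OF assms(1-3,5)] assms
  by (auto simp: marg_edges_def intro: path_through.intros)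

lemma marg_edges_marg_edges:
  assumes "U2 \<subseteq> V" and "U1 \<inter> U2 = {}"
  shows "marg_edges (V - U1) (marg_edges V E U1) U2 = marg_edges V E (U1 \<union> U2)"
  using path_through_marg_edges path_through_marg_edgesI[OF assms]
  by (fastforce simp: marg_edges_def[of "V - U1"] marg_edges_def[of V E "U1 \<union> U2"])

lemma marg_face_trans:
  assumes "marg_face E U1 F F1" and "marg_face (marg_edges V E U1) U2 F1 F'"
  shows "marg_face E (U1 \<union> U2) F F'"
  unfolding marg_face_def
proof (intro conjI ballI)
  show "F \<subseteq> F' \<union> (U1 \<union> U2)"
    using assms unfolding marg_face_def by blast
next
  fix v assume "v \<in> F'"
  with assms(2) consider "v \<in> F1 - U2"
    | u where "u \<in> F1 \<inter> U2" "path_through (marg_edges V E U1) U2 u v"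
    unfolding marg_face_def by blast
  then show "v \<in> F - (U1 \<union> U2) \<or> (\<exists>u \<in> F \<inter> (U1 \<union> U2). path_through E (U1 \<union> U2) u v)"
  proof cases
    case 1
    with assms(1) show ?thesis
      unfolding marg_face_def by (blast intro: path_through_mono)
  next
    case (2 u)
    then have uv: "path_through E (U1 \<union> U2) u v"
      by (blast intro: path_through_marg_edges)
    from 2 assms(1) consider "u \<in> F - U1" | w where "w \<in> F \<inter> U1" "path_through E U1 w u"
      unfolding marg_face_def by blast
    then show ?thesis
    proof cases
      case 1
      with 2 uv show ?thesis by blast
    next
      case (2 w)
      then have "path_through E (U1 \<union> U2) w u"
        by (blast intro: path_through_mono)
      with \<open>u \<in> F1 \<inter> U2\<close> uv have "path_through E (U1 \<union> U2) w v"
        by (blast intro: path_through_trans)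
      with 2 show ?thesis by blast
    qed
  qed
qed

lemma marg_face_split:
  assumes "U2 \<subseteq> V" and "U1 \<inter> U2 = {}" and "F \<subseteq> V" and "F' \<subseteq> V - (U1 \<union> U2)"
    and "marg_face E (U1 \<union> U2) F F'"
  obtains F1 where "F1 \<subseteq> V - U1" and "marg_face E U1 F F1"
    and "marg_face (marg_edges V E U1) U2 F1 F'"
proof -
  define F1 where "F1 = {x \<in> (F' \<union> U2) \<inter> V. x \<in> F - U1 \<or> (\<exists>u \<in> F \<inter> U1. path_through E U1 u x)}"
  have "F1 \<subseteq> V - U1"
    using assms(2,4) unfolding F1_def by auto
  moreover have "marg_face E U1 F F1"
    using assms(3,5) unfolding marg_face_def F1_def by auto
  moreover have "marg_face (marg_edges V E U1) U2 F1 F'"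
    unfolding marg_face_def
  proof (intro conjI ballI)
    show "F1 \<subseteq> F' \<union> U2"
      unfolding F1_def by auto
  next
    fix v assume "v \<in> F'"
    with assms(4) have v: "v \<in> V - U1" "v \<notin> U2" by auto
    from \<open>v \<in> F'\<close> assms(5) consider "v \<in> F - (U1 \<union> U2)"
      | u where "u \<in> F" "u \<in> U1 \<union> U2" "path_through E (U1 \<union> U2) u v"
      unfolding marg_face_def by blast
    then show "v \<in> F1 - U2 \<or> (\<exists>u \<in> F1 \<inter> U2. path_through (marg_edges V E U1) U2 u v)"
    proof cases
      case 1
      with \<open>v \<in> F'\<close> v show ?thesis unfolding F1_def by auto
    next
      case (2 u)
      show ?thesis
      proof (cases "u \<in> U1")
        case True
        from path_through_Un_split[OF assms(1,2) 2(3) v(1)] show ?thesis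
        proof
          assume "path_through E U1 u v"
          with 2 True \<open>v \<in> F'\<close> v show ?thesis unfolding F1_def by auto
        next
          assume "\<exists>c \<in> U2. path_through E U1 u c \<and> path_through (marg_edges V E U1) U2 c v"
          then obtain c where "c \<in> U2" "path_through E U1 u c"
            "path_through (marg_edges V E U1) U2 c v" by blast
          moreover from this 2 True assms(1) have "c \<in> F1"
            unfolding F1_def by auto
          ultimately show ?thesis by blast
        qed
      next
        case False
        with 2 assms(1,2,3) have "u \<in> F1 \<inter> U2" "u \<in> V - U1"
          unfolding F1_def by auto
        moreover from this have "path_through (marg_edges V E U1) U2 u v"
          using path_through_marg_edgesI[OF assms(1,2) 2(3)] v by blast
        ultimately show ?thesis by blast
      qed
    qed
  qed
  ultimately show thesis by (rule that)
qed

lemma hhyper_marg_marg_iff: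
  "F' \<in> hhyper (marg (marg G U1) U2) \<longleftrightarrow> F' \<subseteq> hverts G - (U1 \<union> U2) \<and>
     (\<exists>F \<in> hhyper G. \<exists>F1. F1 \<subseteq> hverts G - U1 \<and> marg_face (hedges G) U1 F F1 \<and>
        marg_face (marg_edges (hverts G) (hedges G) U1) U2 F1 F')"
  unfolding hhyper_marg hverts_marg hedges_marg by blast

lemma marg_marg:
  assumes "\<forall>F \<in> hhyper G. F \<subseteq> hverts G" and "U2 \<subseteq> hverts G" and "U1 \<inter> U2 = {}"
  shows "marg (marg G U1) U2 = marg G (U1 \<union> U2)"
proof (rule hedg_eqI)
  show "hverts (marg (marg G U1) U2) = hverts (marg G (U1 \<union> U2))"
    by (auto simp: hverts_marg)
  show "hedges (marg (marg G U1) U2) = hedges (marg G (U1 \<union> U2))"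
    unfolding hedges_marg hverts_marg by (rule marg_edges_marg_edges[OF assms(2,3)])
  show "hhyper (marg (marg G U1) U2) = hhyper (marg G (U1 \<union> U2))"
  proof (intro set_eqI iffI)
    fix F' assume "F' \<in> hhyper (marg (marg G U1) U2)"
    then obtain F F1 where F': "F' \<subseteq> hverts G - (U1 \<union> U2)" and F: "F \<in> hhyper G"
      and faces: "marg_face (hedges G) U1 F F1" "marg_face (marg_edges (hverts G) (hedges G) U1) U2 F1 F'"
      unfolding hhyper_marg_marg_iff by blast
    from faces have "marg_face (hedges G) (U1 \<union> U2) F F'"
      by (rule marg_face_trans)
    with F' F show "F' \<in> hhyper (marg G (U1 \<union> U2))"
      unfolding hhyper_marg[of G] by blast
  next
    fix F' assume "F' \<in> hhyper (marg G (U1 \<union> U2))"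
    then obtain F where F': "F' \<subseteq> hverts G - (U1 \<union> U2)" and F: "F \<in> hhyper G"
      and face: "marg_face (hedges G) (U1 \<union> U2) F F'"
      unfolding hhyper_marg by blast
    from F assms(1) have "F \<subseteq> hverts G" by blast
    then obtain F1 where "F1 \<subseteq> hverts G - U1" "marg_face (hedges G) U1 F F1"
      "marg_face (marg_edges (hverts G) (hedges G) U1) U2 F1 F'"
      using marg_face_split[OF assms(2,3) _ F' face] by blast
    with F' F show "F' \<in> hhyper (marg (marg G U1) U2)"
      unfolding hhyper_marg_marg_iff by blast
  qed
qed

theorem mainTheorem17:
  fixes G :: "'a hedg" and U1 U2 :: "'a set"
  assumes "is_hedg G"
    and "U1 \<subseteq> hverts G" and "U2 \<subseteq> hverts G"
    and "U1 \<inter> U2 = {}"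
  shows "marg (marg G U1) U2 = marg G (U1 \<union> U2)
       \<and> marg G (U1 \<union> U2) = marg (marg G U2) U1"
proof
  have faces: "\<forall>F \<in> hhyper G. F \<subseteq> hverts G"
    using assms(1) by (simp add: is_hedg_def)
  show "marg (marg G U1) U2 = marg G (U1 \<union> U2)"
    using marg_marg[OF faces assms(3,4)] .
  have "U2 \<inter> U1 = {}"
    using assms(4) by blast
  from marg_marg[OF faces assms(2) this]
  show "marg G (U1 \<union> U2) = marg (marg G U2) U1"
    by (simp only: Un_commute)
qed

end
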